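(* Let $\mathcal{X}$ be a Banach space and $J:\mathcal{X}\to\mathbb{R}\cup\{\infty\}$ a convex, absolutely one-homogeneous functional. Let $v\in\mathcal{X}$ and $p\in\partial J(v)$, and define $$\mathcal{M}^{\mathrm{B}}=\{u\in\mathcal{X}: D_J^p(u,v)=0\},\qquad \mathcal{M}^{\mathrm{IC}}=\{u\in\mathcal{X}: [D_J^p(\cdot,v)\,\Box\, D_J^{-p}(\cdot,-v)](u)=0\}.$$ Then $\mathcal{M}^{\mathrm{B}}\subset\mathcal{M}^{\mathrm{IC}}$.
   Context: Absolutely one-homogeneous: $J(\lambda u)=|\lambda|J(u)$ for all $\lambda\in\mathbb{R}$. Bregman distance: $D_J^{q}(u,w)=J(u)-J(w)-\langle q,u-w\rangle$ for $q\in\partial J(w)$. Infimal convolution: $(F\Box G)(u)=\inf_{z\in\mathcal{X}}F(u-z)+G(z)$. *)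

theory Defs
  imports "HOL-Analysis.Analysis" "HOL-Library.Extended_Real"
begin

(* Functionals J : X \<rightarrow> \<real> \<union> {\<infinity>} are modelled as ereal-valued functions never taking -\<infinity>. *)

definition convex_functional :: "('a::real_vector \<Rightarrow> ereal) \<Rightarrow> bool" where
  "convex_functional J \<longleftrightarrow>
     (\<forall>x y t. 0 \<le> t \<and> t \<le> 1 \<longrightarrow>
        J ((1 - t) *\<^sub>R x + t *\<^sub>R y) \<le> ereal (1 - t) * J x + ereal t * J y)"

definition abs_one_homogeneous :: "('a::real_vector \<Rightarrow> ereal) \<Rightarrow> bool" where
  "abs_one_homogeneous J \<longleftrightarrow> (\<forall>(c::real) u. J (c *\<^sub>R u) = ereal \<bar>c\<bar> * J u)"

definition subdifferential :: "('a::real_normed_vector \<Rightarrow> ereal) \<Rightarrow> 'a \<Rightarrow> ('a \<Rightarrow>\<^sub>L real) set" where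
  "subdifferential J v =
     {p. J v \<noteq> \<infinity> \<and> (\<forall>u. J v + ereal (blinfun_apply p (u - v)) \<le> J u)}"

definition bregman :: "('a::real_normed_vector \<Rightarrow> ereal) \<Rightarrow> ('a \<Rightarrow>\<^sub>L real) \<Rightarrow> 'a \<Rightarrow> 'a \<Rightarrow> ereal" where
  "bregman J q u w = J u - J w - ereal (blinfun_apply q (u - w))"

definition inf_conv :: "('a::ab_group_add \<Rightarrow> ereal) \<Rightarrow> ('a \<Rightarrow> ereal) \<Rightarrow> 'a \<Rightarrow> ereal" where
  "inf_conv F G u = (INF z. F (u - z) + G z)"

end

theory Submission
  imports Defs
begin

text \<open>For absolutely one-homogeneous \<open>J\<close>, a subgradient \<open>p \<in> \<partial>J(v)\<close> satisfies \<open>\<langle>p,v\<rangle> = J(v)\<close>,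
  and \<open>-p \<in> \<partial>J(-v)\<close>. Both Bregman distances in the infimal convolution are therefore
  nonnegative; splitting \<open>u = u + 0\<close>, the first vanishes at \<open>u\<close> whenever \<open>u \<in> \<M>\<^sup>B\<close>,
  and the second vanishes at \<open>0\<close> because \<open>J(0) = 0\<close> and \<open>\<langle>-p,v\<rangle> = -J(v)\<close>.\<close>

lemma abs_one_homogeneous_zero:
  assumes "abs_one_homogeneous J"
  shows "J 0 = 0"
  using assms[unfolded abs_one_homogeneous_def, rule_format, of 0 0]
  by (simp flip: zero_ereal_def)

lemma abs_one_homogeneous_uminus:
  assumes "abs_one_homogeneous J"
  shows "J (- u) = J u"
  using assms[unfolded abs_one_homogeneous_def, rule_format, of "-1" u] by simp

lemma subdifferential_abs_one_homogeneous_eq: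
  assumes "abs_one_homogeneous J" "J v \<noteq> -\<infinity>" "p \<in> subdifferential J v"
  shows "J v = ereal (p v)"
proof -
  have fin: "J v \<noteq> \<infinity>" and sub: "\<And>w. J v + ereal (p (w - v)) \<le> J w"
    using assms(3) unfolding subdifferential_def by auto
  obtain a where a: "J v = ereal a"
    using fin assms(2) by (cases "J v") auto
  have "J v + ereal (p (0 - v)) \<le> J 0" by (rule sub)
  hence "a \<le> p v"
    using a abs_one_homogeneous_zero[OF assms(1)] by (simp add: blinfun.minus_right)
  moreover have "J v + ereal (p (2 *\<^sub>R v - v)) \<le> J (2 *\<^sub>R v)" by (rule sub)
  hence "a + p v \<le> 2 * a"
    using a assms(1)[unfolded abs_one_homogeneous_def, rule_format, of 2 v]
    by (simp add: blinfun.diff_right blinfun.scaleR_right)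
  ultimately show ?thesis using a by simp
qed

lemma subdifferential_abs_one_homogeneous_uminus:
  assumes "abs_one_homogeneous J" "p \<in> subdifferential J v"
  shows "- p \<in> subdifferential J (- v)"
proof -
  have fin: "J v \<noteq> \<infinity>" and sub: "\<And>w. J v + ereal (p (w - v)) \<le> J w"
    using assms(2) unfolding subdifferential_def by auto
  have "J (- v) + ereal ((- p) (u - - v)) \<le> J u" for u
    using sub[of "- u"]
    by (simp add: abs_one_homogeneous_uminus[OF assms(1)] uminus_blinfun.rep_eq
        blinfun.diff_right blinfun.minus_right blinfun.add_right)
  with fin show ?thesis
    unfolding subdifferential_def by (simp add: abs_one_homogeneous_uminus[OF assms(1)])
qed

lemma bregman_nonneg:
  assumes "J v \<noteq> -\<infinity>" "p \<in> subdifferential J v"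
  shows "0 \<le> bregman J p u v"
proof -
  have fin: "J v \<noteq> \<infinity>" and sub: "J v + ereal (p (u - v)) \<le> J u"
    using assms(2) unfolding subdifferential_def by auto
  then obtain a where "J v = ereal a"
    using assms(1) by (cases "J v") auto
  with sub show ?thesis
    unfolding bregman_def by (cases "J u") auto
qed

lemma bregman_abs_one_homogeneous_origin:
  assumes "abs_one_homogeneous J" "J v \<noteq> -\<infinity>" "p \<in> subdifferential J v"
  shows "bregman J p 0 v = 0"
  using subdifferential_abs_one_homogeneous_eq[OF assms]
  by (simp add: bregman_def abs_one_homogeneous_zero[OF assms(1)] blinfun.minus_right)

lemma inf_conv_eq_zeroI:
  fixes F G :: "'a::ab_group_add \<Rightarrow> ereal"
  assumes "\<And>x. 0 \<le> F x" "\<And>x. 0 \<le> G x" "F u = 0" "G 0 = 0"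
  shows "inf_conv F G u = 0"
  unfolding inf_conv_def
proof (rule antisym)
  show "(INF z. F (u - z) + G z) \<le> 0"
    by (rule INF_lower2[of 0]) (simp_all add: assms(3,4))
  show "0 \<le> (INF z. F (u - z) + G z)"
    by (rule INF_greatest) (simp add: assms(1,2))
qed

theorem lemma1:
  fixes J :: "'a::banach \<Rightarrow> ereal" and v :: 'a and p :: "'a \<Rightarrow>\<^sub>L real"
  assumes "\<forall>u. J u \<noteq> -\<infinity>"
    and "convex_functional J"
    and "abs_one_homogeneous J"
    and "p \<in> subdifferential J v"
  shows "{u. bregman J p u v = 0}
           \<subseteq> {u. inf_conv (\<lambda>x. bregman J p x v) (\<lambda>x. bregman J (- p) x (- v)) u = 0}"
proof
  fix u assume "u \<in> {u. bregman J p u v = 0}"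
  hence u_zero: "bregman J p u v = 0" by simp
  have p_neg: "- p \<in> subdifferential J (- v)"
    using subdifferential_abs_one_homogeneous_uminus[OF assms(3,4)] .
  have "inf_conv (\<lambda>x. bregman J p x v) (\<lambda>x. bregman J (- p) x (- v)) u = 0"
  proof (rule inf_conv_eq_zeroI)
    show "0 \<le> bregman J p x v" for x
      using bregman_nonneg assms(1,4) by blast
    show "0 \<le> bregman J (- p) x (- v)" for x
      using bregman_nonneg assms(1) p_neg by blast
    show "bregman J (- p) 0 (- v) = 0"
      using bregman_abs_one_homogeneous_origin assms(1,3) p_neg by blast
  qed (fact u_zero)
  thus "u \<in> {u. inf_conv (\<lambda>x. bregman J p x v) (\<lambda>x. bregman J (- p) x (- v)) u = 0}"
    by simp
qed

end
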